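(* Let $(A,\cdot,\circ)$ be a skew brace such that $A = B\cdot C$ (i.e. every element of $A$ is of the form $bc$ with $b\in B$, $c\in C$) for some sub-skew braces $B$ and $C$ satisfying all of the following: (1) $B$ and $C$ are trivial skew braces; (2) $B$ and $C$ are normal subgroups of $(A,\cdot)$; (3) $B$ and $C$ are left ideals in $A$. Then $A^{(3)} := A'*A = 1$, where $A'=A*A$; that is, $A$ is right nilpotent of index at most $3$.
   Context: A skew brace is a set $A$ with two group operations $\cdot$ (often written by juxtaposition) and $\circ$ such that $a\circ(bc) = (a\circ b)\,a^{-1}\,(a\circ c)$ for all $a,b,c\in A$. The two groups have the same identity $1$; $a^{-1}$ denotes the inverse of $a$ in $(A,\cdot)$ and $\overline{a}$ its inverse in $(A,\circ)$. Define $a*b = a^{-1}(a\circ b)b^{-1}$. For subsets $X,Y\subseteq A$, $X*Y$ denotes the subgroup of $(A,\cdot)$ generated by all $x*y$ with $x\in X$, $y\in Y$. A sub-skew brace is a subset that is a subgroup of both $(A,\cdot)$ and $(A,\circ)$. A skew brace (or sub-skew brace) $B$ is trivial if $a\circ b = ab$ for all $a,b\in B$. A subgroup $I$ of $(A,\cdot)$ is a left ideal in $A$ if $A*I\subseteq I$, and a right ideal in $A$ if $I*A\subseteq I$. *)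

theory Defs
  imports "HOL-Algebra.Algebra"
begin

definition circ_group :: "('a, 'b) monoid_scheme \<Rightarrow> ('a \<Rightarrow> 'a \<Rightarrow> 'a) \<Rightarrow> ('a, 'b) monoid_scheme" where
  "circ_group G circ = G\<lparr>mult := circ\<rparr>"

definition skew_brace :: "('a, 'b) monoid_scheme \<Rightarrow> ('a \<Rightarrow> 'a \<Rightarrow> 'a) \<Rightarrow> bool" where
  "skew_brace G circ \<longleftrightarrow> group G \<and> group (circ_group G circ) \<and>
     (\<forall>a\<in>carrier G. \<forall>b\<in>carrier G. \<forall>c\<in>carrier G.
        circ a (b \<otimes>\<^bsub>G\<^esub> c) = circ a b \<otimes>\<^bsub>G\<^esub> inv\<^bsub>G\<^esub> a \<otimes>\<^bsub>G\<^esub> circ a c)"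

definition sb_star :: "('a, 'b) monoid_scheme \<Rightarrow> ('a \<Rightarrow> 'a \<Rightarrow> 'a) \<Rightarrow> 'a \<Rightarrow> 'a \<Rightarrow> 'a" where
  "sb_star G circ a b = inv\<^bsub>G\<^esub> a \<otimes>\<^bsub>G\<^esub> circ a b \<otimes>\<^bsub>G\<^esub> inv\<^bsub>G\<^esub> b"

definition sb_star_set :: "('a, 'b) monoid_scheme \<Rightarrow> ('a \<Rightarrow> 'a \<Rightarrow> 'a) \<Rightarrow> 'a set \<Rightarrow> 'a set \<Rightarrow> 'a set" where
  "sb_star_set G circ S T = generate G {sb_star G circ s t | s t. s \<in> S \<and> t \<in> T}"

definition sub_skew_brace :: "('a, 'b) monoid_scheme \<Rightarrow> ('a \<Rightarrow> 'a \<Rightarrow> 'a) \<Rightarrow> 'a set \<Rightarrow> bool" where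
  "sub_skew_brace G circ B \<longleftrightarrow> subgroup B G \<and> subgroup B (circ_group G circ)"

definition trivial_on :: "('a, 'b) monoid_scheme \<Rightarrow> ('a \<Rightarrow> 'a \<Rightarrow> 'a) \<Rightarrow> 'a set \<Rightarrow> bool" where
  "trivial_on G circ B \<longleftrightarrow> (\<forall>a\<in>B. \<forall>b\<in>B. circ a b = a \<otimes>\<^bsub>G\<^esub> b)"

definition left_ideal :: "('a, 'b) monoid_scheme \<Rightarrow> ('a \<Rightarrow> 'a \<Rightarrow> 'a) \<Rightarrow> 'a set \<Rightarrow> bool" where
  "left_ideal G circ I \<longleftrightarrow> subgroup I G \<and> sb_star_set G circ (carrier G) I \<subseteq> I"

end

theory Submission
  imports Defs
begin

text \<open>Write \<open>\<lambda>\<^sub>a y = a\<inverse>(a \<circ> y)\<close>. Then \<open>a \<mapsto> \<lambda>\<^sub>a\<close> is a homomorphism from \<open>(A,\<circ>)\<close> to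
  \<open>Aut(A,\<cdot>)\<close>, \<open>a * y = \<lambda>\<^sub>a(y) y\<inverse>\<close>, and \<open>z * y = 1\<close> for every \<open>z\<close> in its kernel, so it suffices
  to show that all \<open>a * x\<close> lie in \<open>ker \<lambda>\<close>. Triviality of \<open>B\<close> and \<open>C\<close> together with \<open>A = BC\<close>
  puts \<open>B \<inter> C\<close> (which contains the commutators \<open>[B,C]\<close>) into the kernel. For \<open>c \<in> C\<close>,
  \<open>c \<circ> b = c\<lambda>\<^sub>c(b) = b''c = b'' \<circ> w\<close> with \<open>b'' = c\<lambda>\<^sub>c(b)c\<inverse> \<in> \<lambda>\<^sub>c(b)(B \<inter> C)\<close> and \<open>w \<in> C\<close>; as elements of
  \<open>C\<close> act trivially on \<open>C\<close>, this shows that \<open>\<lambda>\<^bsub>\<lambda>\<^sub>a(b)\<^esub>\<close> and \<open>\<lambda>\<^sub>b\<close> agree on \<open>C\<close>, hence \<open>\<lambda>\<^sub>a(b) b\<inverse>\<close> lies in the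
  kernel for \<open>b \<in> B\<close>, and symmetrically for \<open>C\<close>. Finally \<open>a * (bc)\<close> is a product of these two
  elements and a commutator from \<open>[B,C]\<close>.\<close>

lemma (in group) commutator_mem_normal_inter:
  assumes "H \<lhd> G" "N \<lhd> G" "g \<in> H" "h \<in> N"
  shows "inv g \<otimes> h \<otimes> g \<otimes> inv h \<in> H \<inter> N"
proof -
  interpret H: normal H G by (fact assms(1))
  interpret N: normal N G by (fact assms(2))
  have g: "g \<in> carrier G" and h: "h \<in> carrier G"
    using assms(3,4) H.subset N.subset by auto
  have "inv g \<otimes> (h \<otimes> g \<otimes> inv h) \<in> H"
    using H.inv_op_closed2[OF h assms(3)] assms(3) by simp
  moreover have "inv g \<otimes> h \<otimes> g \<otimes> inv h \<in> N"
    using N.inv_op_closed1[OF g assms(4)] assms(4) by simp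
  ultimately show ?thesis using g h by (simp add: m_assoc)
qed

locale skew_brace_grp = group G for G (structure) +
  fixes circ :: "'a \<Rightarrow> 'a \<Rightarrow> 'a"
  assumes skew_brace: "skew_brace G circ"
begin

definition lam :: "'a \<Rightarrow> 'a \<Rightarrow> 'a" where
  "lam a y = inv a \<otimes> circ a y"

definition circ_inv :: "'a \<Rightarrow> 'a" where
  "circ_inv a = inv\<^bsub>circ_group G circ\<^esub> a"

definition lam_ker :: "'a set" where
  "lam_ker = {z \<in> carrier G. \<forall>y\<in>carrier G. lam z y = y}"

lemma circ_group: "group (circ_group G circ)"
  using skew_brace by (simp add: skew_brace_def)

lemma circ_group_simps [simp]:
  "carrier (circ_group G circ) = carrier G"
  "\<one>\<^bsub>circ_group G circ\<^esub> = \<one>"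
  "x \<otimes>\<^bsub>circ_group G circ\<^esub> y = circ x y"
  by (simp_all add: circ_group_def)

lemma circ_closed [simp]: "x \<in> carrier G \<Longrightarrow> y \<in> carrier G \<Longrightarrow> circ x y \<in> carrier G"
  using group.is_monoid[OF circ_group] monoid.m_closed by fastforce

lemma circ_assoc:
  "x \<in> carrier G \<Longrightarrow> y \<in> carrier G \<Longrightarrow> z \<in> carrier G \<Longrightarrow> circ (circ x y) z = circ x (circ y z)"
  using group.is_monoid[OF circ_group] monoid.m_assoc by fastforce

lemma circ_one_left [simp]: "x \<in> carrier G \<Longrightarrow> circ \<one> x = x"
  using group.is_monoid[OF circ_group] monoid.l_one by fastforce

lemma circ_inv_closed [simp]: "x \<in> carrier G \<Longrightarrow> circ_inv x \<in> carrier G"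
  unfolding circ_inv_def using group.inv_closed[OF circ_group] by fastforce

lemma circ_circ_inv [simp]: "x \<in> carrier G \<Longrightarrow> circ x (circ_inv x) = \<one>"
  unfolding circ_inv_def using group.r_inv[OF circ_group] by fastforce

lemma circ_mult:
  "a \<in> carrier G \<Longrightarrow> b \<in> carrier G \<Longrightarrow> c \<in> carrier G \<Longrightarrow>
   circ a (b \<otimes> c) = circ a b \<otimes> inv a \<otimes> circ a c"
  using skew_brace by (simp add: skew_brace_def)

lemma lam_closed [simp]: "a \<in> carrier G \<Longrightarrow> y \<in> carrier G \<Longrightarrow> lam a y \<in> carrier G"
  by (simp add: lam_def)

lemma circ_eq_mult_lam: "a \<in> carrier G \<Longrightarrow> y \<in> carrier G \<Longrightarrow> circ a y = a \<otimes> lam a y"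
  by (simp add: lam_def m_assoc[symmetric])

lemma lam_mult:
  "a \<in> carrier G \<Longrightarrow> y \<in> carrier G \<Longrightarrow> z \<in> carrier G \<Longrightarrow> lam a (y \<otimes> z) = lam a y \<otimes> lam a z"
  by (simp add: lam_def circ_mult m_assoc)

lemma lam_one_left [simp]: "y \<in> carrier G \<Longrightarrow> lam \<one> y = y"
  by (simp add: lam_def)

lemma lam_circ:
  assumes a: "a \<in> carrier G" and b: "b \<in> carrier G" and y: "y \<in> carrier G"
  shows "lam (circ a b) y = lam a (lam b y)"
proof -
  have "circ (circ a b) y = circ a (b \<otimes> lam b y)"
    using a b y by (simp add: circ_assoc circ_eq_mult_lam[of b y])
  also have "\<dots> = circ a b \<otimes> lam a (lam b y)"
    using a b y by (simp add: circ_mult lam_def m_assoc)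
  finally show ?thesis
    using a b y by (simp add: lam_def[of "circ a b" y] m_assoc[symmetric])
qed

lemma mult_eq_circ_lam:
  "x \<in> carrier G \<Longrightarrow> y \<in> carrier G \<Longrightarrow> x \<otimes> y = circ x (lam (circ_inv x) y)"
  using circ_eq_mult_lam[of x "lam (circ_inv x) y"] lam_circ[of x "circ_inv x" y] by simp

lemma sb_star_eq_lam:
  "a \<in> carrier G \<Longrightarrow> y \<in> carrier G \<Longrightarrow> sb_star G circ a y = lam a y \<otimes> inv y"
  by (simp add: sb_star_def lam_def m_assoc)

lemma lam_mem_left_ideal:
  assumes I: "left_ideal G circ I" and a: "a \<in> carrier G" and b: "b \<in> I"
  shows "lam a b \<in> I"
proof -
  interpret I: subgroup I G using I by (simp add: left_ideal_def)
  have "sb_star G circ a b \<in> I"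
    using I a b unfolding left_ideal_def sb_star_set_def by (blast intro: generate.incl)
  then have "sb_star G circ a b \<otimes> b \<in> I" using b by simp
  then show ?thesis using a b by (simp add: sb_star_eq_lam m_assoc)
qed

lemma lam_trivial_on:
  assumes "trivial_on G circ B" "B \<subseteq> carrier G" "b \<in> B" "y \<in> B"
  shows "lam b y = y"
proof -
  have "b \<in> carrier G" "y \<in> carrier G" using assms(2-4) by auto
  then show ?thesis using assms by (simp add: lam_def trivial_on_def m_assoc[symmetric])
qed

lemma lam_kerD: "z \<in> lam_ker \<Longrightarrow> y \<in> carrier G \<Longrightarrow> lam z y = y"
  by (simp add: lam_ker_def)

lemma circ_lam_ker: "z \<in> lam_ker \<Longrightarrow> y \<in> carrier G \<Longrightarrow> circ z y = z \<otimes> y"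
  by (simp add: lam_ker_def circ_eq_mult_lam)

lemma subgroup_lam_ker: "subgroup lam_ker G"
proof (rule subgroupI)
  show "lam_ker \<subseteq> carrier G" and "lam_ker \<noteq> {}"
    by (auto simp: lam_ker_def intro!: exI[of _ \<one>])
next
  fix a assume a: "a \<in> lam_ker"
  then have ac: "a \<in> carrier G" by (simp add: lam_ker_def)
  have "lam (inv a) y = y" if y: "y \<in> carrier G" for y
  proof -
    have "lam (inv a) y = lam a (lam (inv a) y)" using lam_kerD[OF a] y ac by simp
    also have "\<dots> = lam (circ a (inv a)) y" using lam_circ ac y by simp
    finally show ?thesis using circ_lam_ker[OF a] ac y by simp
  qed
  then show "inv a \<in> lam_ker" using ac by (simp add: lam_ker_def)
next
  fix a b assume a: "a \<in> lam_ker" and b: "b \<in> lam_ker"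
  then have aG: "a \<in> carrier G" and bG: "b \<in> carrier G" by (simp_all add: lam_ker_def)
  have "lam (a \<otimes> b) y = y" if "y \<in> carrier G" for y
    using that aG bG lam_circ[OF aG bG] lam_kerD[OF a] lam_kerD[OF b]
    by (simp flip: circ_lam_ker[OF a bG])
  then show "a \<otimes> b \<in> lam_ker" using aG bG by (simp add: lam_ker_def)
qed

lemma sb_star_lam_ker: "z \<in> lam_ker \<Longrightarrow> y \<in> carrier G \<Longrightarrow> sb_star G circ z y = \<one>"
  using subgroup.mem_carrier[OF subgroup_lam_ker] by (simp add: sb_star_eq_lam lam_kerD)

lemma sb_star_set_subset:
  assumes "subgroup H G" "\<And>a x. a \<in> S \<Longrightarrow> x \<in> T \<Longrightarrow> sb_star G circ a x \<in> H"
  shows "sb_star_set G circ S T \<subseteq> H"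
  unfolding sb_star_set_def by (rule generate_subgroup_incl) (use assms in auto)

lemma right_nilpotent_3_if_sb_star_lam_ker:
  assumes "\<And>a x. a \<in> carrier G \<Longrightarrow> x \<in> carrier G \<Longrightarrow> sb_star G circ a x \<in> lam_ker"
  shows "sb_star_set G circ (sb_star_set G circ (carrier G) (carrier G)) (carrier G) = {\<one>}"
proof
  have "sb_star_set G circ (carrier G) (carrier G) \<subseteq> lam_ker"
    using sb_star_set_subset[OF subgroup_lam_ker] assms by blast
  then show "sb_star_set G circ (sb_star_set G circ (carrier G) (carrier G)) (carrier G) \<subseteq> {\<one>}"
    using sb_star_set_subset[OF triv_subgroup] sb_star_lam_ker by blast
  show "{\<one>} \<subseteq> sb_star_set G circ (sb_star_set G circ (carrier G) (carrier G)) (carrier G)"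
    by (simp add: sb_star_set_def generate.one)
qed

end

locale factorized_skew_brace = skew_brace_grp +
  fixes B C :: "'a set"
  assumes factorization: "carrier G = {b \<otimes> c | b c. b \<in> B \<and> c \<in> C}"
    and trivial_B: "trivial_on G circ B" and trivial_C: "trivial_on G circ C"
    and normal_B: "B \<lhd> G" and normal_C: "C \<lhd> G"
    and left_ideal_B: "left_ideal G circ B" and left_ideal_C: "left_ideal G circ C"
begin

sublocale B: normal B G by (fact normal_B)
sublocale C: normal C G by (fact normal_C)

lemma factorization_swap: "carrier G = {c \<otimes> b | c b. c \<in> C \<and> b \<in> B}"
proof (intro equalityI subsetI)
  fix x assume "x \<in> carrier G"
  then obtain b c where bc: "b \<in> B" "c \<in> C" "x = b \<otimes> c" using factorization by auto
  then have "inv c \<otimes> b \<otimes> c \<in> B" and "x = c \<otimes> (inv c \<otimes> b \<otimes> c)"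
    using B.inv_op_closed1 B.subset C.subset by (auto simp: m_assoc[symmetric])
  then show "x \<in> {c \<otimes> b | c b. c \<in> C \<and> b \<in> B}" using bc by blast
qed (use B.subset C.subset in auto)

lemma factorized_skew_brace_swap: "factorized_skew_brace G circ C B"
  by (intro factorized_skew_brace.intro factorized_skew_brace_axioms.intro skew_brace_grp_axioms
      factorization_swap trivial_B trivial_C normal_B normal_C left_ideal_B left_ideal_C)

lemma lam_B: "a \<in> carrier G \<Longrightarrow> b \<in> B \<Longrightarrow> lam a b \<in> B"
  using lam_mem_left_ideal[OF left_ideal_B] .

lemma lam_C: "a \<in> carrier G \<Longrightarrow> c \<in> C \<Longrightarrow> lam a c \<in> C"
  using lam_mem_left_ideal[OF left_ideal_C] .

lemma lam_B_B: "b \<in> B \<Longrightarrow> y \<in> B \<Longrightarrow> lam b y = y"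
  using lam_trivial_on[OF trivial_B B.subset] .

lemma lam_C_C: "c \<in> C \<Longrightarrow> y \<in> C \<Longrightarrow> lam c y = y"
  using lam_trivial_on[OF trivial_C C.subset] .

lemma inter_subset_lam_ker: "B \<inter> C \<subseteq> lam_ker"
proof
  fix z assume z: "z \<in> B \<inter> C"
  have "lam z y = y" if "y \<in> carrier G" for y
  proof -
    obtain b c where "b \<in> B" "c \<in> C" "y = b \<otimes> c" using factorization \<open>y \<in> carrier G\<close> by auto
    then show ?thesis using z B.subset C.subset by (auto simp: lam_mult lam_B_B lam_C_C)
  qed
  then show "z \<in> lam_ker" using z B.subset by (auto simp: lam_ker_def)
qed

lemma lam_lam_C_eq_on_C:
  assumes c: "c \<in> C" and b: "b \<in> B" and y: "y \<in> C"
  shows "lam (lam c b) y = lam b y"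
proof -
  have cG: "c \<in> carrier G" and bG: "b \<in> carrier G" and yG: "y \<in> carrier G"
    using c b y B.subset C.subset by auto
  define b' where "b' = lam c b"
  define b'' where "b'' = c \<otimes> b' \<otimes> inv c"
  have b': "b' \<in> B" and b'': "b'' \<in> B"
    unfolding b'_def b''_def using lam_B[OF cG b] B.inv_op_closed2[OF cG] by auto
  have b'G: "b' \<in> carrier G" and b''G: "b'' \<in> carrier G" using b' b'' B.subset by auto
  define w where "w = lam (circ_inv b'') c"
  have w: "w \<in> C" unfolding w_def using lam_C c b''G by simp
  obtain n where n: "n \<in> B \<inter> C" "b'' = b' \<otimes> n"
    using commutator_mem_normal_inter[OF normal_B normal_C b' c] b'G cG
    by (auto simp: b''_def m_assoc[symmetric])
  have "circ c b = b'' \<otimes> c"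
    using cG b'G by (simp add: circ_eq_mult_lam[OF cG bG] b'_def[symmetric] b''_def m_assoc)
  also have "\<dots> = circ b'' w" using mult_eq_circ_lam b''G cG by (simp add: w_def)
  finally have circ_cb: "circ c b = circ b'' w" .
  \<comment> \<open>\<open>c\<close> and \<open>w\<close> lie in \<open>C\<close> and so act trivially on \<open>C\<close>; \<open>n\<close> lies in the kernel\<close>
  have "lam b y = lam (circ c b) y"
    using lam_circ[OF cG bG yG] lam_C_C[OF c lam_C[OF bG y]] by simp
  also have "\<dots> = lam b'' y"
    using circ_cb lam_circ[OF b''G _ yG] w C.subset lam_C_C[OF w y] by auto
  also have "\<dots> = lam (circ b' n) y" using trivial_B b' n by (simp add: trivial_on_def)
  also have "\<dots> = lam b' y"
    using lam_circ b'G n B.subset yG lam_kerD inter_subset_lam_ker by auto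
  finally show ?thesis by (simp add: b'_def)
qed

lemma lam_lam_eq_on_C:
  assumes a: "a \<in> carrier G" and b: "b \<in> B" and y: "y \<in> C"
  shows "lam (lam a b) y = lam b y"
proof -
  obtain b1 c1 where bc: "b1 \<in> B" "c1 \<in> C" "a = b1 \<otimes> c1" using factorization a by auto
  then have b1G: "b1 \<in> carrier G" and c1G: "c1 \<in> carrier G" using B.subset C.subset by auto
  define c2 where "c2 = lam (circ_inv b1) c1"
  have c2: "c2 \<in> C" unfolding c2_def using lam_C bc b1G by simp
  have "a = circ b1 c2" using mult_eq_circ_lam b1G c1G bc by (simp add: c2_def)
  then have "lam a b = lam c2 b"
    using lam_circ b1G c2 C.subset b B.subset lam_B_B bc lam_B by auto
  then show ?thesis using lam_lam_C_eq_on_C c2 b y by simp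
qed

lemma lam_mult_inv_lam_ker:
  assumes a: "a \<in> carrier G" and b: "b \<in> B"
  shows "lam a b \<otimes> inv b \<in> lam_ker"
proof -
  have bG: "b \<in> carrier G" using b B.subset by auto
  have lb: "lam a b \<in> B" using lam_B a b .
  let ?\<beta> = "lam a b \<otimes> inv b"
  have \<beta>: "?\<beta> \<in> B" using lb b by simp
  then have \<beta>G: "?\<beta> \<in> carrier G" using B.subset by auto
  have \<beta>_circ: "?\<beta> = circ (lam a b) (inv b)" using trivial_B lb b by (simp add: trivial_on_def)
  have on_C: "lam ?\<beta> y = y" if y: "y \<in> C" for y
  proof -
    have yG: "y \<in> carrier G" using y C.subset by auto
    have "lam ?\<beta> y = lam (lam a b) (lam (inv b) y)"
      unfolding \<beta>_circ using lam_circ[of "lam a b" "inv b" y] a bG yG by simp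
    also have "\<dots> = lam b (lam (inv b) y)" using lam_lam_eq_on_C a b lam_C bG y by simp
    also have "\<dots> = lam (circ b (inv b)) y" using lam_circ bG yG by simp
    finally show ?thesis using trivial_B b bG yG by (simp add: trivial_on_def)
  qed
  have "lam ?\<beta> x = x" if "x \<in> carrier G" for x
  proof -
    obtain b0 c0 where "b0 \<in> B" "c0 \<in> C" "x = b0 \<otimes> c0" using factorization \<open>x \<in> carrier G\<close> by auto
    then show ?thesis using \<beta> \<beta>G on_C lam_B_B lam_mult B.subset C.subset by auto
  qed
  then show ?thesis using \<beta>G by (simp add: lam_ker_def)
qed

lemma sb_star_mem_lam_ker:
  assumes a: "a \<in> carrier G" and x: "x \<in> carrier G"
  shows "sb_star G circ a x \<in> lam_ker"
proof -
  interpret CB: factorized_skew_brace G circ C B by (rule factorized_skew_brace_swap)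
  interpret K: subgroup lam_ker G by (rule subgroup_lam_ker)
  obtain b c where bc: "b \<in> B" "c \<in> C" "x = b \<otimes> c" using factorization x by auto
  then have bG: "b \<in> carrier G" and cG: "c \<in> carrier G" using B.subset C.subset by auto
  define \<beta> where "\<beta> = lam a b \<otimes> inv b"
  define \<gamma> where "\<gamma> = lam a c \<otimes> inv c"
  have \<beta>: "\<beta> \<in> lam_ker" and \<gamma>: "\<gamma> \<in> lam_ker"
    using lam_mult_inv_lam_ker[OF a bc(1)] CB.lam_mult_inv_lam_ker[OF a bc(2)]
    by (simp_all add: \<beta>_def \<gamma>_def)
  have \<gamma>C: "\<gamma> \<in> C" unfolding \<gamma>_def using lam_C[OF a bc(2)] bc(2) by simp
  define n where "n = inv \<gamma> \<otimes> b \<otimes> \<gamma> \<otimes> inv b"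
  have n: "n \<in> lam_ker"
    using commutator_mem_normal_inter[OF normal_C normal_B \<gamma>C bc(1)] inter_subset_lam_ker
    by (auto simp: n_def)
  have \<gamma>G: "\<gamma> \<in> carrier G" using \<gamma>C C.subset by auto
  have cancel: "u \<otimes> (inv u \<otimes> v) = v" "inv u \<otimes> (u \<otimes> v) = v"
    if "u \<in> carrier G" "v \<in> carrier G" for u v
    using that by (simp_all add: m_assoc[symmetric])
  have "sb_star G circ a x = lam a b \<otimes> \<gamma> \<otimes> inv b"
    using a bc bG cG by (simp add: sb_star_eq_lam lam_mult inv_mult_group m_assoc \<gamma>_def)
  also have "\<dots> = \<beta> \<otimes> \<gamma> \<otimes> n"
    using a bG \<gamma>G by (simp add: \<beta>_def n_def m_assoc cancel)
  finally show ?thesis using \<beta> \<gamma> n by simp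
qed

end

theorem theorem1p4:
  fixes G :: "('a, 'b) monoid_scheme" and circ :: "'a \<Rightarrow> 'a \<Rightarrow> 'a" and B C :: "'a set"
  assumes "skew_brace G circ"
    and "sub_skew_brace G circ B" and "sub_skew_brace G circ C"
    and "carrier G = {b \<otimes>\<^bsub>G\<^esub> c | b c. b \<in> B \<and> c \<in> C}"
    and "trivial_on G circ B" and "trivial_on G circ C"
    and "B \<lhd> G" and "C \<lhd> G"
    and "left_ideal G circ B" and "left_ideal G circ C"
  shows "sb_star_set G circ (sb_star_set G circ (carrier G) (carrier G)) (carrier G) = {\<one>\<^bsub>G\<^esub>}"
proof -
  have "skew_brace_grp G circ"
    using assms(1) by (simp add: skew_brace_grp_def skew_brace_grp_axioms_def skew_brace_def)
  then interpret factorized_skew_brace G circ B C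
    using assms by (intro factorized_skew_brace.intro factorized_skew_brace_axioms.intro)
  show ?thesis using right_nilpotent_3_if_sb_star_lam_ker sb_star_mem_lam_ker by blast
qed

end
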